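(* Let $\mathbf S$ be a specialization semilattice and let $\widetilde S$, its join $\vee$ and the map $K$ be as in the context. Then $(\widetilde S,\vee,K)$ is a closure semilattice, i.e. for all $x,y\in\widetilde S$: $x\le Kx$, $KKx=Kx$, and $x\le y$ implies $Kx\le Ky$.
   Context: A specialization semilattice is a triple $\mathbf S=(S,\vee,\sqsubseteq)$ where $(S,\vee)$ is a join-semilattice, with induced order $a\le b$ iff $a\vee b=b$, and $\sqsubseteq$ is a binary relation on $S$ such that for all $a,b,c,a_1\in S$: (S1) $a\le b$ implies $a\sqsubseteq b$; (S2) $a\sqsubseteq b$ and $b\sqsubseteq c$ imply $a\sqsubseteq c$; (S3) $a\sqsubseteq b$ and $a_1\sqsubseteq b$ imply $a\vee a_1\sqsubseteq b$. Write $\vee_S,\le_S,\sqsubseteq_S$ for the operations/relations of $\mathbf S$. Let $S^{<\omega}$ be the set of finite subsets of $S$. On $S\times S^{<\omega}$ define $(a,B)\precsim(c,D)$, where $D=\{d_1,\dots,d_k\}$ ($k\ge 0$), to hold iff (a1) there exist $d_1^*,\dots,d_k^*\in S$ with $d_j^*\sqsubseteq_S d_j$ for each $j\le k$ and $a\le_S c\vee_S d_1^*\vee_S\cdots\vee_S d_k^*$ (when $D=\emptyset$ this means $a\le_S c$); and (a2) for every $b\in B$ there is $d\in D$ with $b\sqsubseteq_S d$. Let $(a,B)\sim(c,D)$ iff $(a,B)\precsim(c,D)$ and $(c,D)\precsim(a,B)$; this is an equivalence relation. Let $\widetilde S$ be the set of $\sim$-classes, and $[a,B]$ the class of $(a,B)$.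 The join $[a,B]\vee[c,D]=[a\vee_S c,B\cup D]$ on $\widetilde S$ (with induced order $\le$) and the map $K[a,\{b_1,\dots,b_h\}]=[a,\{a\vee_S b_1\vee_S\cdots\vee_S b_h\}]$ are well defined. A closure semilattice is a join-semilattice with a unary operation $K$ that is extensive, idempotent and isotone. *)

theory Defs
  imports Main
begin

text \<open>A specialization semilattice: the join-semilattice is the type class
  semilattice_sup (join = sup, induced order = less_eq), and sp is the
  specialization relation.\<close>

definition spec_semilattice :: "('a::semilattice_sup \<Rightarrow> 'a \<Rightarrow> bool) \<Rightarrow> bool" where
  "spec_semilattice sp \<longleftrightarrow>
     (\<forall>a b. a \<le> b \<longrightarrow> sp a b) \<and>
     (\<forall>a b c. sp a b \<longrightarrow> sp b c \<longrightarrow> sp a c) \<and>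
     (\<forall>a a1 b. sp a b \<longrightarrow> sp a1 b \<longrightarrow> sp (sup a a1) b)"

text \<open>Representatives: pairs (a, B) with B a finite subset of S.
  The finite join c \<or> d1* \<or> ... \<or> dk* is Finite_Set.fold sup c {d1*,...,dk*}
  (equal to c when D is empty).\<close>

definition spec_pre :: "('a::semilattice_sup \<Rightarrow> 'a \<Rightarrow> bool) \<Rightarrow> 'a \<times> 'a set \<Rightarrow> 'a \<times> 'a set \<Rightarrow> bool" where
  "spec_pre sp x y \<longleftrightarrow>
     (\<exists>f. (\<forall>d\<in>snd y. sp (f d) d) \<and> fst x \<le> Finite_Set.fold sup (fst y) (f ` snd y)) \<and>
     (\<forall>b\<in>snd x. \<exists>d\<in>snd y. sp b d)"

definition spec_sim :: "('a::semilattice_sup \<Rightarrow> 'a \<Rightarrow> bool) \<Rightarrow> 'a \<times> 'a set \<Rightarrow> 'a \<times> 'a set \<Rightarrow> bool" where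
  "spec_sim sp x y \<longleftrightarrow> spec_pre sp x y \<and> spec_pre sp y x"

definition tjoin :: "'a::semilattice_sup \<times> 'a set \<Rightarrow> 'a \<times> 'a set \<Rightarrow> 'a \<times> 'a set" where
  "tjoin x y = (sup (fst x) (fst y), snd x \<union> snd y)"

definition tK :: "'a::semilattice_sup \<times> 'a set \<Rightarrow> 'a \<times> 'a set" where
  "tK x = (fst x, {Finite_Set.fold sup (fst x) (snd x)})"

text \<open>Induced order on the quotient: [x] \<le> [y] iff [x] \<or> [y] = [y],
  i.e. (x joined with y) \<sim> y.\<close>
definition tle :: "('a::semilattice_sup \<Rightarrow> 'a \<Rightarrow> bool) \<Rightarrow> 'a \<times> 'a set \<Rightarrow> 'a \<times> 'a set \<Rightarrow> bool" where
  "tle sp x y \<longleftrightarrow> spec_sim sp (tjoin x y) y"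

end

theory Submission
  imports Defs
begin

text \<open>Write \<open>\<Or>x\<close> (\<open>rep_join x\<close> below) for \<open>a \<or> b\<^sub>1 \<or> \<dots> \<or> b\<^sub>h\<close> when \<open>x = (a, {b\<^sub>1, \<dots>, b\<^sub>h})\<close>, so that
  \<open>K x = (a, {\<Or>x})\<close>. The relation \<open>\<le>\<close> on representatives turns out to coincide with \<open>\<precsim>\<close>,
  and \<open>\<precsim>\<close> between two representatives of the form \<open>(a, {m})\<close> with \<open>a \<le> m\<close> reduces
  to \<open>\<sqsubseteq>\<close> between \<open>m\<close> and the other. Since \<open>x \<precsim> y\<close> forces \<open>\<Or>x \<sqsubseteq> \<Or>y\<close> by (S1)--(S3),
  monotonicity of \<open>K\<close> follows, while extensivity and idempotence are direct.\<close>

lemma fold_sup_insert: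
  fixes c :: "'a::semilattice_sup"
  assumes "finite S"
  shows "Finite_Set.fold sup c (insert x S) = sup x (Finite_Set.fold sup c S)"
proof -
  interpret comp_fun_idem "sup :: 'a \<Rightarrow> 'a \<Rightarrow> 'a" by (rule comp_fun_idem_sup)
  show ?thesis using assms by (rule fold_insert_idem)
qed

lemma fold_sup_singleton:
  fixes c :: "'a::semilattice_sup"
  shows "Finite_Set.fold sup c {x} = sup x c"
  using fold_sup_insert[of "{}" c x] by simp

lemma fold_sup_upper_start:
  fixes c :: "'a::semilattice_sup"
  shows "c \<le> Finite_Set.fold sup c S"
proof (cases "finite S")
  case True
  then show ?thesis
    by (induction S rule: finite_induct) (auto simp: fold_sup_insert intro: le_supI2)
qed simp

lemma fold_sup_upper:
  fixes c :: "'a::semilattice_sup"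
  assumes "finite S" and "s \<in> S"
  shows "s \<le> Finite_Set.fold sup c S"
  using assms by (induction S rule: finite_induct) (auto simp: fold_sup_insert intro: le_supI2)

lemma spec_semilatticeD:
  assumes "spec_semilattice sp"
  shows spec_of_le: "a \<le> b \<Longrightarrow> sp a b"
    and spec_trans: "sp a b \<Longrightarrow> sp b c \<Longrightarrow> sp a c"
    and spec_sup: "sp a b \<Longrightarrow> sp a1 b \<Longrightarrow> sp (sup a a1) b"
  using assms unfolding spec_semilattice_def by blast+

lemma spec_refl: "spec_semilattice sp \<Longrightarrow> sp a a"
  by (simp add: spec_of_le)

lemma spec_fold_sup:
  assumes ss: "spec_semilattice sp" and "finite S" and "sp c n" and "\<forall>s\<in>S. sp s n"
  shows "sp (Finite_Set.fold sup c S) n"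
  using assms(2-4)
  by (induction S rule: finite_induct) (auto simp: fold_sup_insert spec_sup[OF ss])

definition rep_join :: "'a::semilattice_sup \<times> 'a set \<Rightarrow> 'a" where
  "rep_join x = Finite_Set.fold sup (fst x) (snd x)"

lemma tK_eq: "tK x = (fst x, {rep_join x})"
  by (simp add: tK_def rep_join_def)

lemma fst_le_rep_join: "fst x \<le> rep_join x"
  by (simp add: rep_join_def fold_sup_upper_start)

lemma rep_join_tK: "rep_join (tK x) = rep_join x"
  by (simp add: tK_eq rep_join_def fold_sup_singleton sup_absorb1 fold_sup_upper_start)

lemma tK_idem: "tK (tK x) = tK x"
  unfolding tK_eq[of "tK x"] rep_join_tK by (simp add: tK_eq)

lemma spec_pre_refl:
  assumes "spec_semilattice sp"
  shows "spec_pre sp x x"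
  unfolding spec_pre_def
  using spec_refl[OF assms] fold_sup_upper_start[of "fst x" "id ` snd x"]
  by (auto intro!: exI[of _ id])

lemma spec_sim_refl: "spec_semilattice sp \<Longrightarrow> spec_sim sp x x"
  by (simp add: spec_sim_def spec_pre_refl)

lemma spec_pre_tjoin_left_iff:
  assumes "spec_semilattice sp"
  shows "spec_pre sp (tjoin x y) y \<longleftrightarrow> spec_pre sp x y"
proof
  assume "spec_pre sp (tjoin x y) y"
  then show "spec_pre sp x y"
    unfolding spec_pre_def tjoin_def by (auto dest: le_supE)
next
  assume "spec_pre sp x y"
  then obtain f where "\<forall>d\<in>snd y. sp (f d) d" "fst x \<le> Finite_Set.fold sup (fst y) (f ` snd y)"
    "\<forall>b\<in>snd x. \<exists>d\<in>snd y. sp b d"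
    unfolding spec_pre_def by blast
  with fold_sup_upper_start[of "fst y" "f ` snd y"] spec_refl[OF assms]
  show "spec_pre sp (tjoin x y) y"
    unfolding spec_pre_def tjoin_def by auto
qed

lemma spec_pre_tjoin_right:
  assumes "spec_semilattice sp"
  shows "spec_pre sp y (tjoin x y)"
proof -
  have "fst y \<le> Finite_Set.fold sup (sup (fst x) (fst y)) (id ` (snd x \<union> snd y))"
    using order_trans[OF sup_ge2 fold_sup_upper_start] .
  then show ?thesis
    unfolding spec_pre_def tjoin_def using spec_refl[OF assms] by (auto intro!: exI[of _ id])
qed

lemma tle_iff_spec_pre:
  assumes "spec_semilattice sp"
  shows "tle sp x y \<longleftrightarrow> spec_pre sp x y"
  by (simp add: tle_def spec_sim_def spec_pre_tjoin_left_iff spec_pre_tjoin_right assms)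

lemma spec_pre_singletons_iff:
  assumes "a \<le> m"
  shows "spec_pre sp (a, {m}) (c, {n}) \<longleftrightarrow> sp m n"
proof
  assume "sp m n"
  moreover have "a \<le> Finite_Set.fold sup c ((\<lambda>_. m) ` {n})"
    using \<open>a \<le> m\<close> by (simp add: fold_sup_singleton le_supI1)
  ultimately show "spec_pre sp (a, {m}) (c, {n})"
    unfolding spec_pre_def by (auto intro!: exI[of _ "\<lambda>_. m"])
qed (simp add: spec_pre_def)

lemma spec_pre_tK_right:
  assumes "spec_semilattice sp" and "finite (snd x)"
  shows "spec_pre sp x (tK x)"
proof -
  have "\<forall>b\<in>snd x. sp b (rep_join x)"
    using fold_sup_upper[OF assms(2)] spec_of_le[OF assms(1)] by (simp add: rep_join_def)
  moreover have "fst x \<le> Finite_Set.fold sup (fst x) (id ` {rep_join x})"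
    by (simp add: fold_sup_singleton)
  ultimately show ?thesis
    unfolding spec_pre_def tK_eq using spec_refl[OF assms(1)] by (auto intro!: exI[of _ id])
qed

lemma spec_pre_imp_spec_rep_join:
  assumes ss: "spec_semilattice sp" and fx: "finite (snd x)" and fy: "finite (snd y)"
    and "spec_pre sp x y"
  shows "sp (rep_join x) (rep_join y)"
proof -
  define n where "n = rep_join y"
  obtain f where f_spec: "\<forall>d\<in>snd y. sp (f d) d"
    and fst_le: "fst x \<le> Finite_Set.fold sup (fst y) (f ` snd y)"
    and snd_spec: "\<forall>b\<in>snd x. \<exists>d\<in>snd y. sp b d"
    using \<open>spec_pre sp x y\<close> unfolding spec_pre_def by blast
  have below_n: "d \<in> snd y \<Longrightarrow> sp d n" for d
    using fold_sup_upper[OF fy] ss by (simp add: n_def rep_join_def spec_of_le)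
  have "sp (fst y) n"
    unfolding n_def by (rule spec_of_le[OF ss fst_le_rep_join])
  moreover have "\<forall>s\<in>f ` snd y. sp s n"
    using f_spec below_n spec_trans[OF ss] by blast
  ultimately have "sp (Finite_Set.fold sup (fst y) (f ` snd y)) n"
    using spec_fold_sup[OF ss] fy by blast
  then have "sp (fst x) n"
    using fst_le spec_trans[OF ss] spec_of_le[OF ss] by blast
  moreover have "\<forall>b\<in>snd x. sp b n"
    using snd_spec below_n spec_trans[OF ss] by blast
  ultimately show ?thesis
    unfolding n_def rep_join_def[of x] using spec_fold_sup[OF ss fx] by blast
qed

lemma tK_mono:
  assumes ss: "spec_semilattice sp" and "finite (snd x)" and "finite (snd y)"
    and "tle sp x y"
  shows "tle sp (tK x) (tK y)"
  using assms spec_pre_imp_spec_rep_join[OF ss]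
  by (simp add: tle_iff_spec_pre tK_eq spec_pre_singletons_iff fst_le_rep_join)

theorem claim3p7:
  fixes sp :: "'a::semilattice_sup \<Rightarrow> 'a \<Rightarrow> bool"
  assumes "spec_semilattice sp"
  shows "\<forall>x y. finite (snd x) \<longrightarrow> finite (snd y) \<longrightarrow>
           tle sp x (tK x) \<and>
           spec_sim sp (tK (tK x)) (tK x) \<and>
           (tle sp x y \<longrightarrow> tle sp (tK x) (tK y))"
proof (intro allI impI conjI)
  fix x y :: "'a \<times> 'a set"
  assume "finite (snd x)" and "finite (snd y)"
  with assms show "tle sp x (tK x)"
    by (simp add: tle_iff_spec_pre spec_pre_tK_right)
  from assms show "spec_sim sp (tK (tK x)) (tK x)"
    by (simp add: tK_idem spec_sim_refl)
  show "tle sp (tK x) (tK y)" if "tle sp x y"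
    using tK_mono assms \<open>finite (snd x)\<close> \<open>finite (snd y)\<close> that .
qed

end
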